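(* Let $\mathcal U$ be a compact interval and consider the model described in the context with fixed $r$ and fixed $k_0\ge1$. Suppose conditions (C1), (C2), (C4') and (C6) of the context hold, with $\tau\in[0,1)$, fixed $L$, and sequences $c_1(p),c_2(p)$. Then for $k=1,\dots,k_0$, $$\max_{1\le j\le p}\sum_{i=1}^p\|\Sigma^{(k)}_{yy,ij}\|_{\mathcal S}^{\tau}\lesssim c_1(p)\quad\text{and}\quad\max_{1\le i\le p}\sum_{j=1}^p\|\Sigma^{(k)}_{yy,ij}\|_{\mathcal S}^{\tau}\lesssim c_1(p)+c_2(p),$$ where $\lesssim$ hides a constant not depending on $p$.
   Context: Notation: for $f\in L_2(\mathcal U)$, $\|f\|=(\int_{\mathcal U}f^2)^{1/2}$; for a bivariate function $K$ on $\mathcal U^2$, $\|K\|_{\mathcal S}=(\iint K(u,v)^2du\,dv)^{1/2}$. For $\tau=0$, $x^0$ is interpreted as $\mathbf 1\{x\neq0\}$ (so the sums count nonzero entries). Model: for each $t$, $\mathbf Y_t(\cdot)=(Y_{t1},\dots,Y_{tp})^{\top}$ is a $p$-vector of random functions in $L_2(\mathcal U)$ with $\mathbf Y_t(u)=\mathbf A\mathbf X_t(u)+\boldsymbol\varepsilon_t(u)$, where $\mathbf A=(A_{ij})\in\mathbb R^{p\times r}$ is deterministic of rank $r$, $\mathbf X_t=(X_{t1},\dots,X_{tr})^{\top}$ is an $r$-vector of latent random functions, and $\boldsymbol\varepsilon_t=(\varepsilon_{t1},\dots,\varepsilon_{tp})^{\top}$ satisfies $E\boldsymbol\varepsilon_t(u)=\mathbf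 0$ and $\mathrm{Cov}\{\boldsymbol\varepsilon_{t+k}(u),\boldsymbol\varepsilon_t(v)\}=\mathbf 0$ for $k\ne0$. Let $\boldsymbol\Sigma^{(k)}_{yy}(u,v)=\mathrm{Cov}\{\mathbf Y_{t+k}(u),\mathbf Y_t(v)\}=(\Sigma^{(k)}_{yy,ij}(u,v))_{p\times p}$, $\boldsymbol\Sigma^{(k)}_{xx}(u,v)=\mathrm{Cov}\{\mathbf X_{t+k}(u),\mathbf X_t(v)\}$, $\boldsymbol\Sigma^{(k)}_{x\varepsilon}(u,v)=\mathrm{Cov}\{\mathbf X_{t+k}(u),\boldsymbol\varepsilon_t(v)\}=(\Sigma^{(k)}_{x\varepsilon,lj}(u,v))_{r\times p}$, $\boldsymbol\Sigma^{(0)}_{\varepsilon\varepsilon}(u,v)=\mathrm{Cov}\{\boldsymbol\varepsilon_t(u),\boldsymbol\varepsilon_t(v)\}$, all not depending on $t$. Conditions. (C1) $\{\mathbf X_t\}$ is weakly stationary with $E\|X_{tj}\|^4=O(1)$, $j=1,\dots,r$; and for at least one $k\in\{1,\dots,k_0\}$ the matrix $\iint\boldsymbol\Sigma^{(k)}_{xx}(u,v)\boldsymbol\Sigma^{(k)}_{xx}(u,v)^{\top}du\,dv$ has rank $r$. (C2) $\{\boldsymbol\varepsilon_t\}$ is white noise with $\max_jE\|\varepsilon_{tj}\|^2=O(1)$, and $\inf_{v\in\mathcal U}\lambda_{\min}\{\boldsymbol\Sigma^{(0)}_{\varepsilon\varepsilon}(v,v)\}$ is bounded away from zero. (C4') For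 $k=1,\dots,k_0$, $\max_{1\le l\le r}\sum_{j=1}^p\|\Sigma^{(k)}_{x\varepsilon,lj}\|_{\mathcal S}^{\tau}\le c_2(p)$; and $\mathrm{Cov}\{\mathbf X_t(u),\boldsymbol\varepsilon_{t+k}(v)\}=\mathbf 0$ for every integer $k\ge0$ and $u,v\in\mathcal U$. (C6) (column sparsity) $\max_{1\le j\le r}\sum_{i=1}^p|A_{ij}|^{\tau}\le c_1(p)$ and $\max_{i,j}|A_{ij}|\le L$, with $\tau\in[0,1)$. *)

theory Defs
  imports "HOL-Probability.Probability"
begin

definition L2norm :: "real \<Rightarrow> real \<Rightarrow> (real \<Rightarrow> real) \<Rightarrow> real" where
  "L2norm a b f = sqrt (LINT u:{a..b}|lborel. (f u)^2)"

definition HSnorm :: "real \<Rightarrow> real \<Rightarrow> (real \<Rightarrow> real \<Rightarrow> real) \<Rightarrow> real" where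
  "HSnorm a b K = sqrt (LINT u:{a..b}|lborel. (LINT v:{a..b}|lborel. (K u v)^2))"

definition covar :: "'w measure \<Rightarrow> ('w \<Rightarrow> real) \<Rightarrow> ('w \<Rightarrow> real) \<Rightarrow> real" where
  "covar M f g = (\<integral>w. f w * g w \<partial>M) - (\<integral>w. f w \<partial>M) * (\<integral>w. g w \<partial>M)"

text \<open>x^tau with the convention x^0 = indicator of x \<noteq> 0 (applied to x \<ge> 0).\<close>
definition tpow :: "real \<Rightarrow> real \<Rightarrow> real" where
  "tpow \<tau> x = (if \<tau> = 0 then (if x = 0 then 0 else 1) else x powr \<tau>)"

text \<open>The observed series Y_t(u) = A X_t(u) + eps_t(u), rows indexed by i (i < p),
  latent components indexed by the finite type 'r (r = CARD('r)).\<close>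
definition Ymodel :: "(nat \<Rightarrow> 'r::finite \<Rightarrow> real) \<Rightarrow> (int \<Rightarrow> 'r \<Rightarrow> real \<Rightarrow> 'w \<Rightarrow> real)
    \<Rightarrow> (int \<Rightarrow> nat \<Rightarrow> real \<Rightarrow> 'w \<Rightarrow> real) \<Rightarrow> int \<Rightarrow> nat \<Rightarrow> real \<Rightarrow> 'w \<Rightarrow> real" where
  "Ymodel A X e t i u w = (\<Sum>l\<in>UNIV. A i l * X t l u w) + e t i u w"

text \<open>Lag-k autocovariance kernel of Y (entry (i,j)); by the standing assumptions it does
  not depend on t, so it is computed at t = 0.\<close>
definition Sigma_yy :: "'w measure \<Rightarrow> (nat \<Rightarrow> 'r::finite \<Rightarrow> real) \<Rightarrow> (int \<Rightarrow> 'r \<Rightarrow> real \<Rightarrow> 'w \<Rightarrow> real)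
    \<Rightarrow> (int \<Rightarrow> nat \<Rightarrow> real \<Rightarrow> 'w \<Rightarrow> real) \<Rightarrow> nat \<Rightarrow> nat \<Rightarrow> nat \<Rightarrow> real \<Rightarrow> real \<Rightarrow> real" where
  "Sigma_yy M A X e k i j u v = covar M (Ymodel A X e (int k) i u) (Ymodel A X e 0 j v)"

definition is_eigenvalue :: "nat \<Rightarrow> (nat \<Rightarrow> nat \<Rightarrow> real) \<Rightarrow> real \<Rightarrow> bool" where
  "is_eigenvalue p S mu \<longleftrightarrow> (\<exists>x::nat \<Rightarrow> real. (\<exists>i<p. x i \<noteq> 0) \<and>
      (\<forall>i<p. (\<Sum>j<p. S i j * x j) = mu * x i))"

end

theory Submission
  imports Defs
begin

(* For k >= 1 the noise eps_(t+k) is uncorrelated with eps_t (white noise) and with X_t (C4'), so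
   Sigma_yy,ij = sum_(l,m) A_il A_jm Sigma_xx,lm + sum_l A_il Sigma_xe,lj.
   By Cauchy-Schwarz and Fubini the Hilbert-Schmidt norm of the covariance kernel of two random
   functions is at most the geometric mean of their values of E ||.||^2; this bounds ||Sigma_xx,lm||
   by the fourth moments of X and ||Sigma_xe,lj|| by the moments of X and eps, whence
   ||Sigma_yy,ij|| <~ sum_l |A_il| (sum_m |A_jm| + ||Sigma_xe,lj||).
   Since x |-> x^tau is subadditive and multiplicative for tau <= 1 and the entries of A are bounded,
   summing the tau-th powers over i leaves only the column sums of |A_il|^tau, i.e. c1(p), while
   summing over j leaves those and the sums bounded in (C4'), i.e. c1(p) + c2(p). *)

section \<open>Subadditivity of tau-th powers and sparse sums\<close>

lemma tpow_nonneg: "0 \<le> tpow \<tau> x"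
  by (simp add: tpow_def)

lemma tpow_zero [simp]: "tpow \<tau> 0 = 0"
  by (simp add: tpow_def)

lemma tpow_mono: "0 \<le> \<tau> \<Longrightarrow> 0 \<le> x \<Longrightarrow> x \<le> y \<Longrightarrow> tpow \<tau> x \<le> tpow \<tau> y"
  by (auto simp: tpow_def intro: powr_mono2)

lemma tpow_mult: "0 \<le> x \<Longrightarrow> 0 \<le> y \<Longrightarrow> tpow \<tau> (x * y) = tpow \<tau> x * tpow \<tau> y"
  by (auto simp: tpow_def powr_mult)

lemma powr_add_le:
  fixes x y \<tau> :: real
  assumes "0 \<le> x" "0 \<le> y" "0 < \<tau>" "\<tau> \<le> 1"
  shows "(x + y) powr \<tau> \<le> x powr \<tau> + y powr \<tau>"
proof (cases "x + y = 0")
  case True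
  then show ?thesis using assms by simp
next
  case False
  then have s: "0 < x + y" using assms by simp
  have le_powr: "z \<le> z powr \<tau>" if "0 \<le> z" "z \<le> 1" for z :: real
    using powr_mono'[of \<tau> 1 z] that assms by (cases "z = 0") auto
  have "1 = x / (x + y) + y / (x + y)"
    using s by (simp add: add_divide_distrib[symmetric])
  also have "\<dots> \<le> (x / (x + y)) powr \<tau> + (y / (x + y)) powr \<tau>"
    using assms s by (intro add_mono le_powr) (auto simp: divide_simps)
  also have "\<dots> = (x powr \<tau> + y powr \<tau>) / (x + y) powr \<tau>"
    using assms s by (simp add: powr_divide add_divide_distrib)
  finally show ?thesis using s by (simp add: divide_simps)
qed

lemma tpow_add_le:
  "0 \<le> \<tau> \<Longrightarrow> \<tau> \<le> 1 \<Longrightarrow> 0 \<le> x \<Longrightarrow> 0 \<le> y \<Longrightarrow> tpow \<tau> (x + y) \<le> tpow \<tau> x + tpow \<tau> y"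
  using powr_add_le[of x y \<tau>] by (auto simp: tpow_def)

lemma tpow_sum_le:
  assumes "0 \<le> \<tau>" "\<tau> \<le> 1" "\<And>s. s \<in> S \<Longrightarrow> 0 \<le> f s"
  shows "tpow \<tau> (\<Sum>s\<in>S. f s) \<le> (\<Sum>s\<in>S. tpow \<tau> (f s))"
  using assms(3)
proof (induction S rule: infinite_finite_induct)
  case (insert s S)
  then have "tpow \<tau> (f s + sum f S) \<le> tpow \<tau> (f s) + tpow \<tau> (sum f S)"
    using assms by (intro tpow_add_le sum_nonneg) auto
  with insert show ?case by simp
qed simp_all

lemma tpow_mult_sum_le:
  assumes "0 \<le> \<tau>" "\<tau> \<le> 1" "0 \<le> c" "\<And>s. s \<in> S \<Longrightarrow> 0 \<le> f s"
  shows "tpow \<tau> (c * (\<Sum>s\<in>S. f s)) \<le> tpow \<tau> c * (\<Sum>s\<in>S. tpow \<tau> (f s))"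
  using assms by (simp add: tpow_mult sum_nonneg mult_left_mono tpow_nonneg tpow_sum_le)

(* r = CARD('r); n, B and D are the factors in HSnorm_Sigma_yy_le and HSnorm_covar_X_e_le. *)
definition sparsity_constant :: "real \<Rightarrow> real \<Rightarrow> real \<Rightarrow> real \<Rightarrow> real \<Rightarrow> real \<Rightarrow> real" where
  "sparsity_constant \<tau> r n L B D = r * (tpow \<tau> (n * (r * L * B + D)) + tpow \<tau> (n * L * B * r) + tpow \<tau> (n * L))"

lemma sum_tpow_column_le:
  fixes A :: "nat \<Rightarrow> 'r::finite \<Rightarrow> real" and V :: "'r \<Rightarrow> real" and n B L D c :: real
  assumes \<tau>: "0 \<le> \<tau>" "\<tau> \<le> 1" and n: "0 \<le> n" and B: "0 \<le> B"
    and H: "\<And>i. i < p \<Longrightarrow> 0 \<le> H i \<and> H i \<le> n * (\<Sum>l\<in>UNIV. \<bar>A i l\<bar> * (B * (\<Sum>m\<in>UNIV. \<bar>A j m\<bar>) + V l))"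
    and A_bound: "\<And>m. \<bar>A j m\<bar> \<le> L" and V: "\<And>l. 0 \<le> V l \<and> V l \<le> D"
    and A_sparse: "\<And>l. (\<Sum>i<p. tpow \<tau> \<bar>A i l\<bar>) \<le> c"
  shows "(\<Sum>i<p. tpow \<tau> (H i)) \<le> sparsity_constant \<tau> CARD('r) n L B D * c"
proof -
  define Q where "Q = n * (CARD('r) * L * B + D)"
  have "0 \<le> L" using A_bound order.trans abs_ge_zero by blast
  moreover have "0 \<le> D" using V order.trans by blast
  ultimately have Q: "0 \<le> Q" using n B by (simp add: Q_def)
  have row_mass: "(\<Sum>m\<in>UNIV. \<bar>A j m\<bar>) \<le> CARD('r) * L"
    using sum_bounded_above[of UNIV "\<lambda>m. \<bar>A j m\<bar>" L] A_bound by simp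
  have "tpow \<tau> (H i) \<le> tpow \<tau> Q * (\<Sum>l\<in>UNIV. tpow \<tau> \<bar>A i l\<bar>)" if i: "i < p" for i
  proof -
    have "(\<Sum>l\<in>UNIV. \<bar>A i l\<bar> * (B * (\<Sum>m\<in>UNIV. \<bar>A j m\<bar>) + V l)) \<le> (\<Sum>l\<in>UNIV. \<bar>A i l\<bar> * (CARD('r) * L * B + D))"
      using row_mass V B by (intro sum_mono mult_left_mono add_mono) (auto simp: mult.commute mult_left_mono)
    then have "H i \<le> n * (\<Sum>l\<in>UNIV. \<bar>A i l\<bar> * (CARD('r) * L * B + D))"
      using H[OF i] n by (meson mult_left_mono order.trans)
    then have "H i \<le> Q * (\<Sum>l\<in>UNIV. \<bar>A i l\<bar>)"
      by (simp add: Q_def sum_distrib_right mult_ac)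
    then have "tpow \<tau> (H i) \<le> tpow \<tau> (Q * (\<Sum>l\<in>UNIV. \<bar>A i l\<bar>))"
      using H[OF i] \<tau> by (intro tpow_mono) auto
    also have "\<dots> \<le> tpow \<tau> Q * (\<Sum>l\<in>UNIV. tpow \<tau> \<bar>A i l\<bar>)"
      using \<tau> Q by (intro tpow_mult_sum_le) auto
    finally show ?thesis .
  qed
  then have "(\<Sum>i<p. tpow \<tau> (H i)) \<le> (\<Sum>i<p. tpow \<tau> Q * (\<Sum>l\<in>UNIV. tpow \<tau> \<bar>A i l\<bar>))"
    by (intro sum_mono) simp
  also have "\<dots> = tpow \<tau> Q * (\<Sum>l\<in>UNIV. \<Sum>i<p. tpow \<tau> \<bar>A i l\<bar>)"
    by (subst sum.swap) (simp add: sum_distrib_left)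
  also have "\<dots> \<le> tpow \<tau> Q * (CARD('r) * c)"
    using sum_bounded_above[of UNIV "\<lambda>l. \<Sum>i<p. tpow \<tau> \<bar>A i l\<bar>" c] A_sparse
    by (intro mult_left_mono tpow_nonneg) auto
  also have "\<dots> \<le> sparsity_constant \<tau> CARD('r) n L B D * c"
    using A_sparse[of undefined] sum_nonneg[of "{..<p}" "\<lambda>i. tpow \<tau> \<bar>A i undefined\<bar>"]
    by (auto simp: sparsity_constant_def Q_def tpow_nonneg algebra_simps intro!: mult_left_mono)
  finally show ?thesis .
qed

(* D does not enter the row bound; it is kept so that both bounds share one constant. *)
lemma sum_tpow_row_le:
  fixes A :: "nat \<Rightarrow> 'r::finite \<Rightarrow> real" and V :: "'r \<Rightarrow> nat \<Rightarrow> real" and n B L D c1 c2 :: real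
  assumes \<tau>: "0 \<le> \<tau>" "\<tau> \<le> 1" and n: "0 \<le> n" and B: "0 \<le> B"
    and H: "\<And>j. j < p \<Longrightarrow> 0 \<le> H j \<and> H j \<le> n * (\<Sum>l\<in>UNIV. \<bar>A i l\<bar> * (B * (\<Sum>m\<in>UNIV. \<bar>A j m\<bar>) + V l j))"
    and A_bound: "\<And>l. \<bar>A i l\<bar> \<le> L" and V: "\<And>l j. 0 \<le> V l j"
    and A_sparse: "\<And>m. (\<Sum>j<p. tpow \<tau> \<bar>A j m\<bar>) \<le> c1"
    and V_sparse: "\<And>l. (\<Sum>j<p. tpow \<tau> (V l j)) \<le> c2"
  shows "(\<Sum>j<p. tpow \<tau> (H j)) \<le> sparsity_constant \<tau> CARD('r) n L B D * (c1 + c2)"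
proof -
  define \<alpha> where "\<alpha> = n * L * B * CARD('r)"
  define \<beta> where "\<beta> = n * L"
  have "0 \<le> L" using A_bound order.trans abs_ge_zero by blast
  then have \<alpha>: "0 \<le> \<alpha>" and \<beta>: "0 \<le> \<beta>" using n B by (simp_all add: \<alpha>_def \<beta>_def)
  have "tpow \<tau> (H j) \<le> tpow \<tau> \<alpha> * (\<Sum>m\<in>UNIV. tpow \<tau> \<bar>A j m\<bar>) + tpow \<tau> \<beta> * (\<Sum>l\<in>UNIV. tpow \<tau> (V l j))"
    if j: "j < p" for j
  proof -
    have "(\<Sum>l\<in>UNIV. \<bar>A i l\<bar> * (B * (\<Sum>m\<in>UNIV. \<bar>A j m\<bar>) + V l j)) \<le> (\<Sum>l\<in>UNIV. L * (B * (\<Sum>m\<in>UNIV. \<bar>A j m\<bar>) + V l j))"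
      using A_bound V B by (intro sum_mono mult_right_mono add_nonneg_nonneg mult_nonneg_nonneg sum_nonneg) auto
    then have "H j \<le> n * (\<Sum>l\<in>UNIV. L * (B * (\<Sum>m\<in>UNIV. \<bar>A j m\<bar>) + V l j))"
      using H[OF j] n by (meson mult_left_mono order.trans)
    also have "\<dots> = \<alpha> * (\<Sum>m\<in>UNIV. \<bar>A j m\<bar>) + \<beta> * (\<Sum>l\<in>UNIV. V l j)"
      by (simp add: \<alpha>_def \<beta>_def sum.distrib flip: sum_distrib_left) (simp add: algebra_simps)
    finally have "tpow \<tau> (H j) \<le> tpow \<tau> (\<alpha> * (\<Sum>m\<in>UNIV. \<bar>A j m\<bar>) + \<beta> * (\<Sum>l\<in>UNIV. V l j))"
      using H[OF j] \<tau> by (intro tpow_mono) auto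
    also have "\<dots> \<le> tpow \<tau> (\<alpha> * (\<Sum>m\<in>UNIV. \<bar>A j m\<bar>)) + tpow \<tau> (\<beta> * (\<Sum>l\<in>UNIV. V l j))"
      using \<tau> \<alpha> \<beta> V by (intro tpow_add_le mult_nonneg_nonneg sum_nonneg) auto
    also have "\<dots> \<le> tpow \<tau> \<alpha> * (\<Sum>m\<in>UNIV. tpow \<tau> \<bar>A j m\<bar>) + tpow \<tau> \<beta> * (\<Sum>l\<in>UNIV. tpow \<tau> (V l j))"
      using \<tau> \<alpha> \<beta> V by (intro add_mono tpow_mult_sum_le) auto
    finally show ?thesis .
  qed
  then have "(\<Sum>j<p. tpow \<tau> (H j))
      \<le> (\<Sum>j<p. tpow \<tau> \<alpha> * (\<Sum>m\<in>UNIV. tpow \<tau> \<bar>A j m\<bar>) + tpow \<tau> \<beta> * (\<Sum>l\<in>UNIV. tpow \<tau> (V l j)))"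
    by (intro sum_mono) simp
  also have "\<dots>
      = tpow \<tau> \<alpha> * (\<Sum>m\<in>UNIV. \<Sum>j<p. tpow \<tau> \<bar>A j m\<bar>) + tpow \<tau> \<beta> * (\<Sum>l\<in>UNIV. \<Sum>j<p. tpow \<tau> (V l j))"
    by (simp add: sum.distrib sum_distrib_left sum.swap[of _ "{..<p}"])
  also have "\<dots> \<le> tpow \<tau> \<alpha> * (CARD('r) * c1) + tpow \<tau> \<beta> * (CARD('r) * c2)"
    using sum_bounded_above[of UNIV "\<lambda>m. \<Sum>j<p. tpow \<tau> \<bar>A j m\<bar>" c1] A_sparse
      sum_bounded_above[of UNIV "\<lambda>l. \<Sum>j<p. tpow \<tau> (V l j)" c2] V_sparse
    by (intro add_mono mult_left_mono tpow_nonneg) auto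
  also have "\<dots> \<le> sparsity_constant \<tau> CARD('r) n L B D * (c1 + c2)"
    using A_sparse[of undefined] sum_nonneg[of "{..<p}" "\<lambda>j. tpow \<tau> \<bar>A j undefined\<bar>"]
      V_sparse[of undefined] sum_nonneg[of "{..<p}" "\<lambda>j. tpow \<tau> (V undefined j)"]
    by (auto simp: sparsity_constant_def \<alpha>_def \<beta>_def tpow_nonneg algebra_simps
        intro!: add_mono add_increasing mult_nonneg_nonneg)
  finally show ?thesis .
qed

section \<open>Square-integrable random variables\<close>

definition square_integrable :: "'w measure \<Rightarrow> ('w \<Rightarrow> real) \<Rightarrow> bool" where
  "square_integrable M f \<longleftrightarrow> f \<in> borel_measurable M \<and> integrable M (\<lambda>w. (f w)^2)"

lemma abs_mult_le_sum_squares: "\<bar>x * y\<bar> \<le> x^2 + (y::real)^2"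
proof -
  have "2 * \<bar>x\<bar> * \<bar>y\<bar> \<le> x^2 + y^2" using sum_squares_bound[of "\<bar>x\<bar>" "\<bar>y\<bar>"] by simp
  moreover have "0 \<le> \<bar>x\<bar> * \<bar>y\<bar>" by simp
  ultimately show ?thesis unfolding abs_mult by linarith
qed

lemma square_integrable_integrable_mult:
  assumes "square_integrable M f" "square_integrable M g"
  shows "integrable M (\<lambda>w. f w * g w)"
proof (rule Bochner_Integration.integrable_bound)
  show "integrable M (\<lambda>w. (f w)^2 + (g w)^2)" using assms by (auto simp: square_integrable_def)
  show "(\<lambda>w. f w * g w) \<in> borel_measurable M" using assms by (auto simp: square_integrable_def)
  show "AE w in M. norm (f w * g w) \<le> norm ((f w)^2 + (g w)^2)"
    using abs_mult_le_sum_squares by auto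
qed

lemma (in finite_measure) square_integrable_integrable:
  "square_integrable M f \<Longrightarrow> integrable M f"
  by (auto simp: square_integrable_def intro: square_integrable_imp_integrable)

lemma square_integrable_add:
  assumes "square_integrable M f" "square_integrable M g"
  shows "square_integrable M (\<lambda>w. f w + g w)"
proof -
  have "integrable M (\<lambda>w. (f w)^2 + (g w)^2 + 2 * (f w * g w))"
    using assms square_integrable_integrable_mult[OF assms] by (auto simp: square_integrable_def)
  with assms show ?thesis
    unfolding square_integrable_def by (auto simp: power2_sum algebra_simps)
qed

lemma square_integrable_cmult: "square_integrable M f \<Longrightarrow> square_integrable M (\<lambda>w. c * f w)"
  by (auto simp: square_integrable_def power_mult_distrib)

lemma square_integrable_sum:
  assumes "\<And>s. s \<in> S \<Longrightarrow> square_integrable M (f s)"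
  shows "square_integrable M (\<lambda>w. \<Sum>s\<in>S. f s w)"
  using assms
proof (induction S rule: infinite_finite_induct)
  case (insert s S)
  then show ?case by (simp add: square_integrable_add)
qed (simp_all add: square_integrable_def)

lemma (in finite_measure) square_integrable_const: "square_integrable M (\<lambda>w. c)"
  by (simp add: square_integrable_def)

lemma covar_commute: "covar M f g = covar M g f"
  unfolding covar_def by (simp only: mult.commute)

lemma covar_cmult_left: "covar M (\<lambda>w. c * f w) g = c * covar M f g"
  unfolding covar_def by (simp add: mult.assoc right_diff_distrib)

lemma (in finite_measure) covar_add_left:
  assumes "square_integrable M f" "square_integrable M h" "square_integrable M g"
  shows "covar M (\<lambda>w. f w + h w) g = covar M f g + covar M h g"
proof -
  have "integrable M f" "integrable M h"
    using assms by (auto intro: square_integrable_integrable)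
  moreover have "integrable M (\<lambda>w. f w * g w)" "integrable M (\<lambda>w. h w * g w)"
    using assms by (auto intro: square_integrable_integrable_mult)
  ultimately show ?thesis
    unfolding covar_def by (simp add: distrib_right algebra_simps)
qed

lemma (in finite_measure) covar_sum_left:
  assumes "\<And>s. s \<in> S \<Longrightarrow> square_integrable M (f s)" "square_integrable M g"
  shows "covar M (\<lambda>w. \<Sum>s\<in>S. f s w) g = (\<Sum>s\<in>S. covar M (f s) g)"
  using assms(1)
proof (induction S rule: infinite_finite_induct)
  case (insert s S)
  then have "square_integrable M (\<lambda>w. \<Sum>s\<in>S. f s w)"
    by (intro square_integrable_sum) auto
  with insert assms(2) show ?case by (simp add: covar_add_left)
qed (simp_all add: covar_def)

lemma (in finite_measure) covar_linear_combination:
  fixes f g :: "'r::finite \<Rightarrow> 'a \<Rightarrow> real"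
  assumes f: "\<And>l. square_integrable M (f l)" and g: "\<And>m. square_integrable M (g m)"
    and x: "square_integrable M x" and y: "square_integrable M y"
    and x_g: "\<And>m. covar M x (g m) = 0" and x_y: "covar M x y = 0"
  shows "covar M (\<lambda>w. (\<Sum>l\<in>UNIV. c l * f l w) + x w) (\<lambda>w. (\<Sum>m\<in>UNIV. d m * g m w) + y w)
     = (\<Sum>l\<in>UNIV. \<Sum>m\<in>UNIV. c l * d m * covar M (f l) (g m)) + (\<Sum>l\<in>UNIV. c l * covar M (f l) y)"
proof -
  have expand: "covar M (\<lambda>w. (\<Sum>l\<in>UNIV. c l * f l w) + x w) z
      = (\<Sum>l\<in>UNIV. c l * covar M (f l) z) + covar M x z"
    if f: "\<And>l. square_integrable M (f l)" and x: "square_integrable M x" and z: "square_integrable M z"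
    for c f x z
  proof -
    have cf: "square_integrable M (\<lambda>w. c l * f l w)" for l using f by (rule square_integrable_cmult)
    then have "square_integrable M (\<lambda>w. \<Sum>l\<in>UNIV. c l * f l w)" by (rule square_integrable_sum)
    then have "covar M (\<lambda>w. (\<Sum>l\<in>UNIV. c l * f l w) + x w) z
        = covar M (\<lambda>w. \<Sum>l\<in>UNIV. c l * f l w) z + covar M x z"
      using x z by (rule covar_add_left)
    also have "covar M (\<lambda>w. \<Sum>l\<in>UNIV. c l * f l w) z = (\<Sum>l\<in>UNIV. covar M (\<lambda>w. c l * f l w) z)"
      using cf z by (rule covar_sum_left)
    finally show ?thesis by (simp add: covar_cmult_left)
  qed
  have Y: "square_integrable M (\<lambda>w. (\<Sum>m\<in>UNIV. d m * g m w) + y w)"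
    by (intro square_integrable_add square_integrable_sum square_integrable_cmult g y)
  have expand_Y: "covar M z (\<lambda>w. (\<Sum>m\<in>UNIV. d m * g m w) + y w)
      = (\<Sum>m\<in>UNIV. d m * covar M z (g m)) + covar M z y" if "square_integrable M z" for z
    using expand[OF g y that] by (simp add: covar_commute)
  show ?thesis
    using expand[OF f x Y] x
    by (simp add: expand_Y f x_g x_y distrib_left sum.distrib sum_distrib_left mult.assoc)
qed

lemma quadratic_nonneg_imp_discriminant_le:
  fixes A B C :: real
  assumes nonneg: "\<And>t. 0 \<le> t^2 * A - 2 * t * C + B" and "0 \<le> A"
  shows "C^2 \<le> A * B"
proof (cases "A = 0")
  case True
  have "C = 0"
  proof (rule ccontr)
    assume "C \<noteq> 0"
    then show False using nonneg[of "(B + 1) / (2 * C)"] True by simp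
  qed
  with True show ?thesis by simp
next
  case False
  with \<open>0 \<le> A\<close> have "0 < A" by simp
  have "0 \<le> (C / A)^2 * A - 2 * (C / A) * C + B" by (rule nonneg)
  also have "\<dots> = B - C^2 / A" using \<open>0 < A\<close> by (simp add: power2_eq_square divide_simps)
  finally show ?thesis using \<open>0 < A\<close> by (simp add: pos_divide_le_eq mult.commute)
qed

lemma integral_mult_square_le:
  assumes f: "square_integrable M f" and g: "square_integrable M g"
  shows "(\<integral>w. f w * g w \<partial>M)^2 \<le> (\<integral>w. (f w)^2 \<partial>M) * (\<integral>w. (g w)^2 \<partial>M)"
proof (rule quadratic_nonneg_imp_discriminant_le)
  fix t :: real
  have "integrable M (\<lambda>w. (f w)^2)" "integrable M (\<lambda>w. (g w)^2)" "integrable M (\<lambda>w. f w * g w)"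
    using f g square_integrable_integrable_mult[OF f g] by (auto simp: square_integrable_def)
  then have "(\<integral>w. (t * f w - g w)^2 \<partial>M)
      = t^2 * (\<integral>w. (f w)^2 \<partial>M) - 2 * t * (\<integral>w. f w * g w \<partial>M) + (\<integral>w. (g w)^2 \<partial>M)"
    by (simp add: power2_diff power_mult_distrib mult.assoc)
  moreover have "0 \<le> (\<integral>w. (t * f w - g w)^2 \<partial>M)" by simp
  ultimately show "0 \<le> t^2 * (\<integral>w. (f w)^2 \<partial>M) - 2 * t * (\<integral>w. f w * g w \<partial>M) + (\<integral>w. (g w)^2 \<partial>M)"
    by simp
qed simp

lemma (in prob_space) covar_square_le:
  assumes f: "square_integrable M f" and g: "square_integrable M g"
  shows "(covar M f g)^2 \<le> expectation (\<lambda>w. (f w)^2) * expectation (\<lambda>w. (g w)^2)"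
proof -
  have f': "square_integrable M (\<lambda>w. f w - expectation f)"
    and g': "square_integrable M (\<lambda>w. g w - expectation g)"
    using square_integrable_add[OF f square_integrable_const] square_integrable_add[OF g square_integrable_const]
    by (simp_all only: diff_conv_add_uminus)
  have "integrable M f" "integrable M g" "integrable M (\<lambda>w. f w * g w)"
    using f g by (auto intro: square_integrable_integrable square_integrable_integrable_mult)
  then have "covar M f g = (\<integral>w. (f w - expectation f) * (g w - expectation g) \<partial>M)"
    by (simp add: covar_def algebra_simps prob_space)
  also note integral_mult_square_le[OF f' g']
  also have "(\<integral>w. (f w - expectation f)^2 \<partial>M) * (\<integral>w. (g w - expectation g)^2 \<partial>M)
      \<le> expectation (\<lambda>w. (f w)^2) * expectation (\<lambda>w. (g w)^2)"
    using f g variance_eq[of f] variance_eq[of g] variance_positive[of f] variance_positive[of g]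
    by (intro mult_mono) (auto simp: square_integrable_def square_integrable_integrable)
  finally show ?thesis by simp
qed

section \<open>Hilbert-Schmidt norms of kernels\<close>

lemma set_integral_mono_AE':
  fixes f g :: "_ \<Rightarrow> real"
  assumes "set_integrable M A g" "AE x\<in>A in M. f x \<le> g x" "AE x\<in>A in M. 0 \<le> g x"
  shows "(LINT x:A|M. f x) \<le> (LINT x:A|M. g x)"
  using assms unfolding set_integrable_def set_lebesgue_integral_def
  by (intro integral_mono_AE') (auto elim!: eventually_mono split: split_indicator)

lemma set_integral_nonneg: "(\<And>x. 0 \<le> f x) \<Longrightarrow> 0 \<le> (LINT x:A|M. (f x :: real))"
  unfolding set_lebesgue_integral_def by (intro integral_nonneg_AE) (auto simp: indicator_def)

lemma set_integrable_sum:
  fixes f :: "'i \<Rightarrow> 'a \<Rightarrow> real"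
  assumes "\<And>s. s \<in> S \<Longrightarrow> set_integrable M A (f s)"
  shows "set_integrable M A (\<lambda>x. \<Sum>s\<in>S. f s x)"
  using assms unfolding set_integrable_def real_scaleR_def sum_distrib_left by (intro Bochner_Integration.integrable_sum) auto

lemma set_integral_sum:
  fixes f :: "'i \<Rightarrow> 'a \<Rightarrow> real"
  assumes "\<And>s. s \<in> S \<Longrightarrow> set_integrable M A (f s)"
  shows "(LINT x:A|M. (\<Sum>s\<in>S. f s x)) = (\<Sum>s\<in>S. (LINT x:A|M. f s x))"
  using assms unfolding set_integrable_def set_lebesgue_integral_def real_scaleR_def sum_distrib_left
  by (intro Bochner_Integration.integral_sum) auto

definition square_integrable_kernel :: "real \<Rightarrow> real \<Rightarrow> (real \<Rightarrow> real \<Rightarrow> real) \<Rightarrow> bool" where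
  "square_integrable_kernel a b K \<longleftrightarrow>
     (AE u\<in>{a..b} in lborel. set_integrable lborel {a..b} (\<lambda>v. (K u v)^2)) \<and>
     set_integrable lborel {a..b} (\<lambda>u. LINT v:{a..b}|lborel. (K u v)^2)"

lemma HSnorm_power2: "(HSnorm a b K)^2 = (LINT u:{a..b}|lborel. LINT v:{a..b}|lborel. (K u v)^2)"
  unfolding HSnorm_def by (intro real_sqrt_pow2 set_integral_nonneg) simp

lemma HSnorm_nonneg: "0 \<le> HSnorm a b K"
  unfolding HSnorm_def by (intro real_sqrt_ge_zero set_integral_nonneg) simp

lemma HSnorm_cmult: "HSnorm a b (\<lambda>u v. c * K u v) = \<bar>c\<bar> * HSnorm a b K"
  by (simp add: HSnorm_def power_mult_distrib real_sqrt_mult)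

lemma square_integrable_kernel_cmult:
  "square_integrable_kernel a b K \<Longrightarrow> square_integrable_kernel a b (\<lambda>u v. c * K u v)"
  by (auto simp: square_integrable_kernel_def power_mult_distrib elim!: eventually_mono)

lemma square_integrable_kernel_dominated:
  fixes K :: "real \<Rightarrow> real \<Rightarrow> real" and g d :: "real \<Rightarrow> real"
  assumes K [measurable]: "(\<lambda>(u, v). K u v) \<in> borel_measurable (lborel \<Otimes>\<^sub>M lborel)"
    and dom: "AE u\<in>{a..b} in lborel. AE v\<in>{a..b} in lborel. (K u v)^2 \<le> g u * d v"
    and g: "set_integrable lborel {a..b} g" "\<And>u. 0 \<le> g u"
    and d: "set_integrable lborel {a..b} d" "\<And>v. 0 \<le> d v"
  shows "square_integrable_kernel a b K"
    and "HSnorm a b K \<le> sqrt ((LINT u:{a..b}|lborel. g u) * (LINT v:{a..b}|lborel. d v))"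
proof -
  define D where "D = (LINT v:{a..b}|lborel. d v)"
  have inner: "set_integrable lborel {a..b} (\<lambda>v. (K u v)^2) \<and> (LINT v:{a..b}|lborel. (K u v)^2) \<le> g u * D"
    if dom_u: "AE v\<in>{a..b} in lborel. (K u v)^2 \<le> g u * d v" for u
  proof
    have gd: "set_integrable lborel {a..b} (\<lambda>v. g u * d v)" using d by simp
    have "K u \<in> borel_measurable lborel" using measurable_Pair2[OF K, of u] by simp
    then show K_u: "set_integrable lborel {a..b} (\<lambda>v. (K u v)^2)"
      by (intro set_integrable_bound[OF gd])
        (use dom_u g d in \<open>auto simp: set_borel_measurable_def elim!: eventually_mono\<close>)
    have "(LINT v:{a..b}|lborel. (K u v)^2) \<le> (LINT v:{a..b}|lborel. g u * d v)"
      using K_u gd dom_u by (rule set_integral_mono_AE)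
    then show "(LINT v:{a..b}|lborel. (K u v)^2) \<le> g u * D" by (simp add: D_def)
  qed
  have AE_inner: "AE u\<in>{a..b} in lborel. set_integrable lborel {a..b} (\<lambda>v. (K u v)^2) \<and>
      (LINT v:{a..b}|lborel. (K u v)^2) \<le> g u * D"
    using dom by eventually_elim (use inner in blast)
  have gD: "set_integrable lborel {a..b} (\<lambda>u. g u * D)" using g by simp
  have D: "0 \<le> D" unfolding D_def using d(2) by (rule set_integral_nonneg)
  have outer: "set_integrable lborel {a..b} (\<lambda>u. LINT v:{a..b}|lborel. (K u v)^2)"
    by (intro set_integrable_bound[OF gD])
      (use AE_inner g D in \<open>auto simp: set_borel_measurable_def set_lebesgue_integral_def
        elim!: eventually_mono intro!: integral_nonneg_AE\<close>)
  then show "square_integrable_kernel a b K"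
    using AE_inner by (auto simp: square_integrable_kernel_def elim!: eventually_mono)
  have "(LINT u:{a..b}|lborel. LINT v:{a..b}|lborel. (K u v)^2) \<le> (LINT u:{a..b}|lborel. g u * D)"
    using outer gD AE_inner by (intro set_integral_mono_AE) (auto elim!: eventually_mono)
  then show "HSnorm a b K \<le> sqrt ((LINT u:{a..b}|lborel. g u) * (LINT v:{a..b}|lborel. d v))"
    by (simp add: HSnorm_def D_def)
qed

lemma HSnorm_power2_le_sum:
  fixes Ks :: "'i \<Rightarrow> real \<Rightarrow> real \<Rightarrow> real"
  assumes S: "finite S" "\<And>s. s \<in> S \<Longrightarrow> square_integrable_kernel a b (Ks s)" and c: "0 \<le> c"
    and le: "AE u\<in>{a..b} in lborel. AE v\<in>{a..b} in lborel. (K u v)^2 \<le> c * (\<Sum>s\<in>S. (Ks s u v)^2)"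
  shows "(HSnorm a b K)^2 \<le> c * (\<Sum>s\<in>S. (HSnorm a b (Ks s))^2)"
proof -
  define I where "I = (\<lambda>s u. LINT v:{a..b}|lborel. (Ks s u v)^2)"
  have I: "set_integrable lborel {a..b} (I s)" if "s \<in> S" for s
    using S that by (auto simp: square_integrable_kernel_def I_def)
  have I_nonneg: "0 \<le> c * (\<Sum>s\<in>S. I s u)" for u
    using c unfolding I_def by (intro mult_nonneg_nonneg sum_nonneg set_integral_nonneg) auto
  have AE_Ks: "AE u in lborel. \<forall>s\<in>S. u \<in> {a..b} \<longrightarrow> set_integrable lborel {a..b} (\<lambda>v. (Ks s u v)^2)"
    using S by (intro eventually_ball_finite) (auto simp: square_integrable_kernel_def)
  have "AE u\<in>{a..b} in lborel. (LINT v:{a..b}|lborel. (K u v)^2) \<le> c * (\<Sum>s\<in>S. I s u)"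
    using AE_Ks le
  proof eventually_elim
    case (elim u)
    show ?case
    proof
      assume u: "u \<in> {a..b}"
      have "(LINT v:{a..b}|lborel. (K u v)^2) \<le> (LINT v:{a..b}|lborel. c * (\<Sum>s\<in>S. (Ks s u v)^2))"
      proof (rule set_integral_mono_AE')
        show "set_integrable lborel {a..b} (\<lambda>v. c * (\<Sum>s\<in>S. (Ks s u v)^2))"
          using elim u by (intro set_integrable_mult_right set_integrable_sum) auto
        show "AE v\<in>{a..b} in lborel. (K u v)^2 \<le> c * (\<Sum>s\<in>S. (Ks s u v)^2)"
          using elim u by blast
        show "AE v\<in>{a..b} in lborel. 0 \<le> c * (\<Sum>s\<in>S. (Ks s u v)^2)"
          using c by (intro AE_I2 impI mult_nonneg_nonneg sum_nonneg) auto
      qed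
      with elim u show "(LINT v:{a..b}|lborel. (K u v)^2) \<le> c * (\<Sum>s\<in>S. I s u)"
        by (simp add: set_integral_sum I_def)
    qed
  qed
  then have "(LINT u:{a..b}|lborel. LINT v:{a..b}|lborel. (K u v)^2) \<le> (LINT u:{a..b}|lborel. c * (\<Sum>s\<in>S. I s u))"
    using I I_nonneg by (intro set_integral_mono_AE' set_integrable_mult_right set_integrable_sum) auto
  also have "\<dots> = c * (\<Sum>s\<in>S. LINT u:{a..b}|lborel. I s u)"
    using I by (simp add: set_integral_sum)
  finally show ?thesis by (simp add: HSnorm_power2 I_def)
qed

(* A crude triangle inequality: paying the factor sqrt (card S) avoids all cross terms. *)
lemma HSnorm_sum_le:
  fixes Ks :: "'i \<Rightarrow> real \<Rightarrow> real \<Rightarrow> real"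
  assumes S: "finite S" "\<And>s. s \<in> S \<Longrightarrow> square_integrable_kernel a b (Ks s)"
    and K: "AE u\<in>{a..b} in lborel. AE v\<in>{a..b} in lborel. K u v = (\<Sum>s\<in>S. Ks s u v)"
  shows "HSnorm a b K \<le> sqrt (card S) * (\<Sum>s\<in>S. HSnorm a b (Ks s))"
proof -
  have "AE u\<in>{a..b} in lborel. AE v\<in>{a..b} in lborel. (K u v)^2 \<le> card S * (\<Sum>s\<in>S. (Ks s u v)^2)"
  proof -
    have "(\<Sum>s\<in>S. Ks s u v)^2 \<le> card S * (\<Sum>s\<in>S. (Ks s u v)^2)" for u v
      using sum_squared_le_sum_of_squares by (simp add: mult.commute)
    with K show ?thesis by (auto elim!: eventually_mono)
  qed
  then have "(HSnorm a b K)^2 \<le> card S * (\<Sum>s\<in>S. (HSnorm a b (Ks s))^2)"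
    using S by (intro HSnorm_power2_le_sum) auto
  then have "HSnorm a b K \<le> sqrt (card S) * L2_set (\<lambda>s. HSnorm a b (Ks s)) S"
    by (simp add: L2_set_def real_le_rsqrt flip: real_sqrt_mult)
  also have "\<dots> \<le> sqrt (card S) * (\<Sum>s\<in>S. HSnorm a b (Ks s))"
    by (intro mult_left_mono L2_set_le_sum HSnorm_nonneg) simp
  finally show ?thesis .
qed

section \<open>Covariance kernels of random functions\<close>

definition L2_random_function :: "real \<Rightarrow> real \<Rightarrow> 'w measure \<Rightarrow> (real \<Rightarrow> 'w \<Rightarrow> real) \<Rightarrow> bool" where
  "L2_random_function a b M Z \<longleftrightarrow> (\<lambda>(u, w). Z u w) \<in> borel_measurable (lborel \<Otimes>\<^sub>M M) \<and>
     (AE u\<in>{a..b} in lborel. square_integrable M (Z u)) \<and>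
     set_integrable lborel {a..b} (\<lambda>u. \<integral>w. (Z u w)^2 \<partial>M)"

definition mean_square_norm :: "real \<Rightarrow> real \<Rightarrow> 'w measure \<Rightarrow> (real \<Rightarrow> 'w \<Rightarrow> real) \<Rightarrow> real" where
  "mean_square_norm a b M Z = (LINT u:{a..b}|lborel. \<integral>w. (Z u w)^2 \<partial>M)"

lemma L2norm_power2: "(L2norm a b f)^2 = (LINT u:{a..b}|lborel. (f u)^2)"
  unfolding L2norm_def by (intro real_sqrt_pow2 set_integral_nonneg) simp

lemma mean_square_norm_nonneg: "0 \<le> mean_square_norm a b M Z"
  unfolding mean_square_norm_def by (intro set_integral_nonneg integral_nonneg_AE) simp

lemma (in sigma_finite_measure) L2_random_function_Fubini:
  fixes Z :: "real \<Rightarrow> 'a \<Rightarrow> real"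
  assumes Z [measurable]: "(\<lambda>(u, w). Z u w) \<in> borel_measurable (lborel \<Otimes>\<^sub>M M)"
    and paths: "\<And>w. w \<in> space M \<Longrightarrow> set_integrable lborel {a..b} (\<lambda>u. (Z u w)^2)"
    and energy: "integrable M (\<lambda>w. (L2norm a b (\<lambda>u. Z u w))^2)"
  shows "L2_random_function a b M Z"
    and "mean_square_norm a b M Z = (\<integral>w. (L2norm a b (\<lambda>u. Z u w))^2 \<partial>M)"
proof -
  interpret pair_sigma_finite M lborel ..
  define F where "F w u = indicator {a..b} u * (Z u w)^2" for w u
  have F: "integrable (M \<Otimes>\<^sub>M lborel) (\<lambda>(w, u). F w u)"
  proof (rule Fubini_integrable)
    show "(\<lambda>(w, u). F w u) \<in> borel_measurable (M \<Otimes>\<^sub>M lborel)"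
      unfolding F_def by measurable
    show "integrable M (\<lambda>w. \<integral>u. norm ((\<lambda>(w, u). F w u) (w, u)) \<partial>lborel)"
      using energy by (simp add: F_def L2norm_power2 set_lebesgue_integral_def abs_mult)
    show "AE w in M. integrable lborel (\<lambda>u. (\<lambda>(w, u). F w u) (w, u))"
      using paths by (intro AE_I2) (simp add: F_def set_integrable_def)
  qed
  have "AE u\<in>{a..b} in lborel. square_integrable M (Z u)"
    using AE_integrable_snd[OF F] measurable_Pair2[OF Z]
    by (auto simp: square_integrable_def F_def elim!: eventually_mono)
  moreover have "set_integrable lborel {a..b} (\<lambda>u. \<integral>w. (Z u w)^2 \<partial>M)"
    using integrable_snd[OF F] by (simp add: set_integrable_def F_def)
  ultimately show "L2_random_function a b M Z"
    by (simp add: L2_random_function_def)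
  show "mean_square_norm a b M Z = (\<integral>w. (L2norm a b (\<lambda>u. Z u w))^2 \<partial>M)"
    using Fubini_integral[OF F]
    by (simp add: mean_square_norm_def F_def L2norm_power2 set_lebesgue_integral_def)
qed

lemma (in sigma_finite_measure) covar_kernel_measurable:
  assumes [measurable]: "(\<lambda>(u, w). F u w) \<in> borel_measurable (lborel \<Otimes>\<^sub>M M)"
    "(\<lambda>(v, w). G v w) \<in> borel_measurable (lborel \<Otimes>\<^sub>M M)"
  shows "(\<lambda>(u, v). covar M (F u) (G v)) \<in> borel_measurable (lborel \<Otimes>\<^sub>M lborel)"
  unfolding covar_def by measurable

lemma (in prob_space) HSnorm_covar_kernel_le:
  assumes F: "L2_random_function a b M F" and G: "L2_random_function a b M G"
  shows "square_integrable_kernel a b (\<lambda>u v. covar M (F u) (G v))"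
    and "HSnorm a b (\<lambda>u v. covar M (F u) (G v)) \<le> sqrt (mean_square_norm a b M F * mean_square_norm a b M G)"
proof -
  have "AE u\<in>{a..b} in lborel. AE v\<in>{a..b} in lborel.
      (covar M (F u) (G v))^2 \<le> (\<integral>w. (F u w)^2 \<partial>M) * (\<integral>w. (G v w)^2 \<partial>M)"
    using F G by (auto simp: L2_random_function_def intro: covar_square_le elim!: eventually_mono)
  moreover have "(\<lambda>(u, v). covar M (F u) (G v)) \<in> borel_measurable (lborel \<Otimes>\<^sub>M lborel)"
    using F G by (intro covar_kernel_measurable) (auto simp: L2_random_function_def)
  ultimately show "square_integrable_kernel a b (\<lambda>u v. covar M (F u) (G v))"
    and "HSnorm a b (\<lambda>u v. covar M (F u) (G v)) \<le> sqrt (mean_square_norm a b M F * mean_square_norm a b M G)"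
    using F G square_integrable_kernel_dominated[of "\<lambda>u v. covar M (F u) (G v)"]
    by (auto simp: L2_random_function_def mean_square_norm_def)
qed

section \<open>The functional factor model\<close>

locale functional_factor_model = prob_space M
  for M :: "'w measure" +
  fixes a b :: real
    and X :: "int \<Rightarrow> 'r::finite \<Rightarrow> real \<Rightarrow> 'w \<Rightarrow> real"
    and e :: "int \<Rightarrow> nat \<Rightarrow> real \<Rightarrow> 'w \<Rightarrow> real"
    and p :: nat and CX Ce :: real
  assumes X_measurable: "(\<lambda>(u, w). X t l u w) \<in> borel_measurable (lborel \<Otimes>\<^sub>M M)"
    and e_measurable: "j < p \<Longrightarrow> (\<lambda>(u, w). e t j u w) \<in> borel_measurable (lborel \<Otimes>\<^sub>M M)"
    and X_paths: "w \<in> space M \<Longrightarrow> set_integrable lborel {a..b} (\<lambda>u. (X t l u w)^2)"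
    and e_paths: "j < p \<Longrightarrow> w \<in> space M \<Longrightarrow> set_integrable lborel {a..b} (\<lambda>u. (e t j u w)^2)"
    and X_fourth_moment: "integrable M (\<lambda>w. (L2norm a b (\<lambda>u. X t l u w))^4)"
      "(\<integral>w. (L2norm a b (\<lambda>u. X t l u w))^4 \<partial>M) \<le> CX"
    and e_second_moment: "j < p \<Longrightarrow> integrable M (\<lambda>w. (L2norm a b (\<lambda>u. e t j u w))^2)"
      "j < p \<Longrightarrow> (\<integral>w. (L2norm a b (\<lambda>u. e t j u w))^2 \<partial>M) \<le> Ce"
    and X_e_uncorrelated: "0 \<le> s \<Longrightarrow> j < p \<Longrightarrow> covar M (X t l u) (e (t + s) j v) = 0"
    and e_white: "j < p \<Longrightarrow> j' < p \<Longrightarrow> s \<noteq> 0 \<Longrightarrow> covar M (e (t + s) j u) (e t j' v) = 0"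
begin

lemma CX_nonneg: "0 \<le> CX"
proof -
  have "0 \<le> (\<integral>w. (L2norm a b (\<lambda>u. X 0 undefined u w))^4 \<partial>M)"
    by (intro integral_nonneg_AE AE_I2) (simp add: zero_le_power_eq)
  then show ?thesis using X_fourth_moment(2) by (rule order.trans)
qed

lemma X_L2_random_function:
  shows "L2_random_function a b M (X t l)" and "mean_square_norm a b M (X t l) \<le> 1 + CX"
proof -
  define I where "I = (\<lambda>w. (L2norm a b (\<lambda>u. X t l u w))^2)"
  have [measurable]: "(\<lambda>(u, w). X t l u w) \<in> borel_measurable (lborel \<Otimes>\<^sub>M M)"
    by (rule X_measurable)
  have "I \<in> borel_measurable M"
    unfolding I_def L2norm_power2 set_lebesgue_integral_def by measurable
  moreover have I_square: "integrable M (\<lambda>w. (I w)^2)"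
    using X_fourth_moment(1) by (simp add: I_def flip: power_mult)
  ultimately have I: "integrable M I"
    by (rule square_integrable_imp_integrable)
  note Fubini = L2_random_function_Fubini[OF X_measurable X_paths I[unfolded I_def]]
  then show "L2_random_function a b M (X t l)" by blast
  have "I w \<le> 1 + (I w)^2" for w
  proof -
    have "0 \<le> I w" by (simp add: I_def)
    then show ?thesis using sum_squares_bound[of "I w" 1] by simp
  qed
  then have "expectation I \<le> expectation (\<lambda>w. 1 + (I w)^2)"
    using I I_square by (intro integral_mono) auto
  also have "\<dots> = 1 + expectation (\<lambda>w. (I w)^2)"
    using I_square by (simp add: prob_space)
  also have "expectation (\<lambda>w. (I w)^2) \<le> CX"
    using X_fourth_moment(2) by (simp add: I_def flip: power_mult)
  finally show "mean_square_norm a b M (X t l) \<le> 1 + CX"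
    using Fubini(2) by (simp add: I_def)
qed

lemma e_L2_random_function:
  assumes "j < p"
  shows "L2_random_function a b M (e t j)" and "mean_square_norm a b M (e t j) \<le> Ce"
  using L2_random_function_Fubini[OF e_measurable e_paths e_second_moment(1)] e_second_moment(2) assms
  by auto

lemma HSnorm_covar_X_X_le:
  shows "square_integrable_kernel a b (\<lambda>u v. covar M (X s l u) (X t m v))"
    and "HSnorm a b (\<lambda>u v. covar M (X s l u) (X t m v)) \<le> 1 + CX"
proof -
  note X = X_L2_random_function
  show "square_integrable_kernel a b (\<lambda>u v. covar M (X s l u) (X t m v))"
    using HSnorm_covar_kernel_le(1)[OF X(1) X(1)] .
  have "mean_square_norm a b M (X s l) * mean_square_norm a b M (X t m) \<le> (1 + CX)^2"
    unfolding power2_eq_square using X(2) CX_nonneg by (intro mult_mono) (auto intro: mean_square_norm_nonneg)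
  then have "sqrt (mean_square_norm a b M (X s l) * mean_square_norm a b M (X t m)) \<le> 1 + CX"
    using CX_nonneg by (intro real_le_lsqrt) auto
  with HSnorm_covar_kernel_le(2)[OF X(1) X(1)]
  show "HSnorm a b (\<lambda>u v. covar M (X s l u) (X t m v)) \<le> 1 + CX" by (rule order.trans)
qed

lemma HSnorm_covar_X_e_le:
  assumes "j < p"
  shows "square_integrable_kernel a b (\<lambda>u v. covar M (X s l u) (e t j v))"
    and "HSnorm a b (\<lambda>u v. covar M (X s l u) (e t j v)) \<le> sqrt ((1 + CX) * Ce)"
proof -
  note X = X_L2_random_function and E = e_L2_random_function[OF assms]
  show "square_integrable_kernel a b (\<lambda>u v. covar M (X s l u) (e t j v))"
    using HSnorm_covar_kernel_le(1)[OF X(1) E(1)] .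
  have "mean_square_norm a b M (X s l) * mean_square_norm a b M (e t j) \<le> (1 + CX) * Ce"
    using X(2) E(2) CX_nonneg by (intro mult_mono) (auto intro: mean_square_norm_nonneg)
  with HSnorm_covar_kernel_le(2)[OF X(1) E(1)]
  show "HSnorm a b (\<lambda>u v. covar M (X s l u) (e t j v)) \<le> sqrt ((1 + CX) * Ce)"
    using real_sqrt_le_mono order.trans by blast
qed

lemma Sigma_yy_eq:
  fixes A :: "nat \<Rightarrow> 'r \<Rightarrow> real"
  assumes k: "1 \<le> k" and i: "i < p" and j: "j < p"
    and u: "\<And>l. square_integrable M (X k l u)" "square_integrable M (e k i u)"
    and v: "\<And>m. square_integrable M (X 0 m v)" "square_integrable M (e 0 j v)"
  shows "Sigma_yy M A X e k i j u v
    = (\<Sum>l\<in>UNIV. \<Sum>m\<in>UNIV. A i l * A j m * covar M (X k l u) (X 0 m v))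
      + (\<Sum>l\<in>UNIV. A i l * covar M (X k l u) (e 0 j v))"
proof -
  have "covar M (e k i u) (X 0 m v) = 0" for m
    using X_e_uncorrelated[of k i 0 m v u] k i by (simp add: covar_commute)
  moreover have "covar M (e k i u) (e 0 j v) = 0"
    using e_white[of i j k 0 u v] k i j by simp
  ultimately show ?thesis
    unfolding Sigma_yy_def Ymodel_def using u v by (simp add: covar_linear_combination)
qed

lemma AE_square_integrable:
  "AE u\<in>{a..b} in lborel. (\<forall>l. square_integrable M (X t l u)) \<and> (\<forall>j<p. square_integrable M (e t j u))"
proof -
  have "AE u in lborel. \<forall>l. u \<in> {a..b} \<longrightarrow> square_integrable M (X t l u)"
    using X_L2_random_function(1) by (intro eventually_all_finite) (auto simp: L2_random_function_def)
  moreover have "AE u in lborel. \<forall>j\<in>{..<p}. u \<in> {a..b} \<longrightarrow> square_integrable M (e t j u)"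
    using e_L2_random_function(1) by (intro eventually_ball_finite) (auto simp: L2_random_function_def)
  ultimately show ?thesis by eventually_elim auto
qed

lemma HSnorm_Sigma_yy_le:
  fixes A :: "nat \<Rightarrow> 'r \<Rightarrow> real"
  assumes k: "1 \<le> k" and i: "i < p" and j: "j < p"
  shows "HSnorm a b (Sigma_yy M A X e k i j) \<le> sqrt CARD('r \<times> 'r + 'r) *
    (\<Sum>l\<in>UNIV. \<bar>A i l\<bar> * ((1 + CX) * (\<Sum>m\<in>UNIV. \<bar>A j m\<bar>) + HSnorm a b (\<lambda>u v. covar M (X k l u) (e 0 j v))))"
proof -
  define Kxx where "Kxx = (\<lambda>l m u v. covar M (X k l u) (X 0 m v))"
  define Kxe where "Kxe = (\<lambda>l u v. covar M (X k l u) (e 0 j v))"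
  define Ks :: "'r \<times> 'r + 'r \<Rightarrow> real \<Rightarrow> real \<Rightarrow> real" where
    "Ks = case_sum (\<lambda>(l, m) u v. A i l * A j m * Kxx l m u v) (\<lambda>l u v. A i l * Kxe l u v)"
  have sum_UNIV: "(\<Sum>s\<in>UNIV. f s) = (\<Sum>l\<in>UNIV. \<Sum>m\<in>UNIV. f (Inl (l, m))) + (\<Sum>l\<in>UNIV. f (Inr l))"
    for f :: "'r \<times> 'r + 'r \<Rightarrow> real"
    by (simp add: sum.Plus sum.cartesian_product flip: UNIV_Plus_UNIV UNIV_Times_UNIV)
  have kernels: "square_integrable_kernel a b (Ks s)" for s
    using HSnorm_covar_X_X_le(1) HSnorm_covar_X_e_le(1)[OF j]
    by (cases s) (auto simp: Ks_def Kxx_def Kxe_def intro!: square_integrable_kernel_cmult)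
  note AE_u = AE_square_integrable[of k] and AE_v = AE_square_integrable[of 0]
  have "AE u\<in>{a..b} in lborel. AE v\<in>{a..b} in lborel. Sigma_yy M A X e k i j u v = (\<Sum>s\<in>UNIV. Ks s u v)"
    using AE_u by eventually_elim
      (use AE_v i j in \<open>auto elim!: eventually_mono simp: Sigma_yy_eq[OF k i j] sum_UNIV Ks_def Kxx_def Kxe_def\<close>)
  then have "HSnorm a b (Sigma_yy M A X e k i j) \<le> sqrt CARD('r \<times> 'r + 'r) * (\<Sum>s\<in>UNIV. HSnorm a b (Ks s))"
    using kernels by (intro HSnorm_sum_le) auto
  moreover have "(\<Sum>s\<in>UNIV. HSnorm a b (Ks s))
      \<le> (\<Sum>l\<in>UNIV. \<bar>A i l\<bar> * ((1 + CX) * (\<Sum>m\<in>UNIV. \<bar>A j m\<bar>) + HSnorm a b (Kxe l)))"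
  proof -
    have "(\<Sum>s\<in>UNIV. HSnorm a b (Ks s))
        = (\<Sum>l\<in>UNIV. \<Sum>m\<in>UNIV. \<bar>A i l\<bar> * \<bar>A j m\<bar> * HSnorm a b (Kxx l m)) + (\<Sum>l\<in>UNIV. \<bar>A i l\<bar> * HSnorm a b (Kxe l))"
      by (simp add: sum_UNIV Ks_def HSnorm_cmult abs_mult)
    also have "\<dots> \<le> (\<Sum>l\<in>UNIV. \<Sum>m\<in>UNIV. \<bar>A i l\<bar> * \<bar>A j m\<bar> * (1 + CX)) + (\<Sum>l\<in>UNIV. \<bar>A i l\<bar> * HSnorm a b (Kxe l))"
      using HSnorm_covar_X_X_le(2) by (intro add_right_mono sum_mono mult_left_mono) (auto simp: Kxx_def)
    also have "\<dots> = (\<Sum>l\<in>UNIV. \<bar>A i l\<bar> * ((1 + CX) * (\<Sum>m\<in>UNIV. \<bar>A j m\<bar>) + HSnorm a b (Kxe l)))"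
      by (simp add: sum_distrib_left sum.distrib algebra_simps)
    finally show ?thesis .
  qed
  ultimately show ?thesis
    unfolding Kxe_def by (meson order.trans mult_left_mono real_sqrt_ge_zero of_nat_0_le_iff)
qed

lemma sum_tpow_HSnorm_Sigma_yy_column_le:
  fixes A :: "nat \<Rightarrow> 'r \<Rightarrow> real" and \<tau> L c1 :: real
  assumes \<tau>: "0 \<le> \<tau>" "\<tau> \<le> 1" and k: "1 \<le> k" and j: "j < p"
    and A_bound: "\<And>i l. i < p \<Longrightarrow> \<bar>A i l\<bar> \<le> L"
    and A_sparse: "\<And>l. (\<Sum>i<p. tpow \<tau> \<bar>A i l\<bar>) \<le> c1"
  shows "(\<Sum>i<p. tpow \<tau> (HSnorm a b (Sigma_yy M A X e k i j)))
    \<le> sparsity_constant \<tau> CARD('r) (sqrt CARD('r \<times> 'r + 'r)) L (1 + CX) (sqrt ((1 + CX) * Ce)) * c1"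
  using \<tau> HSnorm_Sigma_yy_le[OF k _ j] A_bound[OF j] A_sparse HSnorm_covar_X_e_le(2)[OF j] CX_nonneg
  by (intro sum_tpow_column_le[where V="\<lambda>l. HSnorm a b (\<lambda>u v. covar M (X k l u) (e 0 j v))"])
    (auto simp: HSnorm_nonneg)

lemma sum_tpow_HSnorm_Sigma_yy_row_le:
  fixes A :: "nat \<Rightarrow> 'r \<Rightarrow> real" and \<tau> L c1 c2 :: real
  assumes \<tau>: "0 \<le> \<tau>" "\<tau> \<le> 1" and k: "1 \<le> k" and i: "i < p"
    and A_bound: "\<And>l. \<bar>A i l\<bar> \<le> L"
    and A_sparse: "\<And>l. (\<Sum>j<p. tpow \<tau> \<bar>A j l\<bar>) \<le> c1"
    and cross_sparse: "\<And>l. (\<Sum>j<p. tpow \<tau> (HSnorm a b (\<lambda>u v. covar M (X k l u) (e 0 j v)))) \<le> c2"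
  shows "(\<Sum>j<p. tpow \<tau> (HSnorm a b (Sigma_yy M A X e k i j)))
    \<le> sparsity_constant \<tau> CARD('r) (sqrt CARD('r \<times> 'r + 'r)) L (1 + CX) (sqrt ((1 + CX) * Ce)) * (c1 + c2)"
  using \<tau> HSnorm_Sigma_yy_le[OF k i] A_bound A_sparse cross_sparse CX_nonneg
  by (intro sum_tpow_row_le[where V="\<lambda>l j. HSnorm a b (\<lambda>u v. covar M (X k l u) (e 0 j v))"])
    (auto simp: HSnorm_nonneg)

end

theorem lemma1:
  fixes a b :: real
    and M :: "nat \<Rightarrow> 'w measure"
    and A :: "nat \<Rightarrow> nat \<Rightarrow> 'r::finite \<Rightarrow> real"
    and X :: "nat \<Rightarrow> int \<Rightarrow> 'r \<Rightarrow> real \<Rightarrow> 'w \<Rightarrow> real"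
    and e :: "nat \<Rightarrow> int \<Rightarrow> nat \<Rightarrow> real \<Rightarrow> 'w \<Rightarrow> real"
    and k0 :: nat and \<tau> L :: real and c1 c2 :: "nat \<Rightarrow> real"
  assumes ab: "a < b"
    and k0: "1 \<le> k0"
    and prob: "\<forall>p\<ge>CARD('r). prob_space (M p)"
    \<comment> \<open>random functions in L2(U): jointly measurable, square-integrable paths\<close>
    and X_meas: "\<forall>p\<ge>CARD('r). \<forall>t l. (\<lambda>(u,w). X p t l u w) \<in> borel_measurable (lborel \<Otimes>\<^sub>M M p)"
    and e_meas: "\<forall>p\<ge>CARD('r). \<forall>t j. j < p \<longrightarrow> (\<lambda>(u,w). e p t j u w) \<in> borel_measurable (lborel \<Otimes>\<^sub>M M p)"
    and X_L2: "\<forall>p\<ge>CARD('r). \<forall>t l. \<forall>w\<in>space (M p). set_integrable lborel {a..b} (\<lambda>u. (X p t l u w)^2)"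
    and e_L2: "\<forall>p\<ge>CARD('r). \<forall>t j. j < p \<longrightarrow> (\<forall>w\<in>space (M p). set_integrable lborel {a..b} (\<lambda>u. (e p t j u w)^2))"
    \<comment> \<open>A has rank r (its r columns are linearly independent)\<close>
    and A_rank: "\<forall>p\<ge>CARD('r). \<forall>c::'r \<Rightarrow> real. (\<forall>i<p. (\<Sum>l\<in>UNIV. A p i l * c l) = 0) \<longrightarrow> (\<forall>l. c l = 0)"
    \<comment> \<open>(C1)\<close>
    and X_stat_mean: "\<forall>p\<ge>CARD('r). \<forall>t l u. (\<integral>w. X p t l u w \<partial>M p) = (\<integral>w. X p 0 l u w \<partial>M p)"
    and X_stat_cov: "\<forall>p\<ge>CARD('r). \<forall>t s l m u v.
        covar (M p) (X p (t + s) l u) (X p t m v) = covar (M p) (X p s l u) (X p 0 m v)"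
    and X_mom4: "\<exists>CX. \<forall>p\<ge>CARD('r). \<forall>t l.
        integrable (M p) (\<lambda>w. (L2norm a b (\<lambda>u. X p t l u w))^4) \<and>
        (\<integral>w. (L2norm a b (\<lambda>u. X p t l u w))^4 \<partial>M p) \<le> CX"
    and X_rank: "\<forall>p\<ge>CARD('r). \<exists>k\<in>{1..k0}.
        rank (\<chi> l m. \<Sum>q\<in>UNIV. LINT u:{a..b}|lborel. LINT v:{a..b}|lborel.
           covar (M p) (X p (int k) l u) (X p 0 q v) * covar (M p) (X p (int k) m u) (X p 0 q v)
           :: real^'r^'r) = CARD('r)"
    \<comment> \<open>(C2)\<close>
    and e_mean: "\<forall>p\<ge>CARD('r). \<forall>t j u. j < p \<longrightarrow> (\<integral>w. e p t j u w \<partial>M p) = 0"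
    and e_white: "\<forall>p\<ge>CARD('r). \<forall>t s j j' u v. j < p \<longrightarrow> j' < p \<longrightarrow> s \<noteq> 0 \<longrightarrow>
        covar (M p) (e p (t + s) j u) (e p t j' v) = 0"
    and e_stat: "\<forall>p\<ge>CARD('r). \<forall>t j j' u v. j < p \<longrightarrow> j' < p \<longrightarrow>
        covar (M p) (e p t j u) (e p t j' v) = covar (M p) (e p 0 j u) (e p 0 j' v)"
    and e_mom2: "\<exists>Ce. \<forall>p\<ge>CARD('r). \<forall>t j. j < p \<longrightarrow>
        integrable (M p) (\<lambda>w. (L2norm a b (\<lambda>u. e p t j u w))^2) \<and>
        (\<integral>w. (L2norm a b (\<lambda>u. e p t j u w))^2 \<partial>M p) \<le> Ce"
    and e_eig: "\<exists>c>0. \<forall>p\<ge>CARD('r). \<forall>v\<in>{a..b}. \<forall>mu.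
        is_eigenvalue p (\<lambda>i j. covar (M p) (e p 0 i v) (e p 0 j v)) mu \<longrightarrow> c \<le> mu"
    \<comment> \<open>cross-covariance of X and eps does not depend on t\<close>
    and Xe_stat: "\<forall>p\<ge>CARD('r). \<forall>t s l j u v. j < p \<longrightarrow>
        covar (M p) (X p (t + s) l u) (e p t j v) = covar (M p) (X p s l u) (e p 0 j v)"
    \<comment> \<open>(C4')\<close>
    and C4a: "\<forall>p\<ge>CARD('r). \<forall>k\<in>{1..k0}. \<forall>l.
        (\<Sum>j<p. tpow \<tau> (HSnorm a b (\<lambda>u v. covar (M p) (X p (int k) l u) (e p 0 j v)))) \<le> c2 p"
    and C4b: "\<forall>p\<ge>CARD('r). \<forall>t s l j u v. 0 \<le> s \<longrightarrow> j < p \<longrightarrow>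
        covar (M p) (X p t l u) (e p (t + s) j v) = 0"
    \<comment> \<open>(C6)\<close>
    and tau: "0 \<le> \<tau>" "\<tau> < 1"
    and C6a: "\<forall>p\<ge>CARD('r). \<forall>l. (\<Sum>i<p. tpow \<tau> \<bar>A p i l\<bar>) \<le> c1 p"
    and C6b: "\<forall>p\<ge>CARD('r). \<forall>i<p. \<forall>l. \<bar>A p i l\<bar> \<le> L"
  shows "\<exists>C. \<forall>p\<ge>CARD('r). \<forall>k\<in>{1..k0}.
     (\<forall>j<p. (\<Sum>i<p. tpow \<tau> (HSnorm a b (Sigma_yy (M p) (A p) (X p) (e p) k i j))) \<le> C * c1 p) \<and>
     (\<forall>i<p. (\<Sum>j<p. tpow \<tau> (HSnorm a b (Sigma_yy (M p) (A p) (X p) (e p) k i j))) \<le> C * (c1 p + c2 p))"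
proof -
  obtain CX where CX: "\<forall>p\<ge>CARD('r). \<forall>t l. integrable (M p) (\<lambda>w. (L2norm a b (\<lambda>u. X p t l u w))^4) \<and>
      (\<integral>w. (L2norm a b (\<lambda>u. X p t l u w))^4 \<partial>M p) \<le> CX"
    using X_mom4 by blast
  obtain Ce where Ce: "\<forall>p\<ge>CARD('r). \<forall>t j. j < p \<longrightarrow> integrable (M p) (\<lambda>w. (L2norm a b (\<lambda>u. e p t j u w))^2) \<and>
      (\<integral>w. (L2norm a b (\<lambda>u. e p t j u w))^2 \<partial>M p) \<le> Ce"
    using e_mom2 by blast
  have model: "functional_factor_model (M p) a b (X p) (e p) p CX Ce" if "CARD('r) \<le> p" for p
    using that prob X_meas e_meas X_L2 e_L2 CX Ce C4b e_white
    by (intro functional_factor_model.intro functional_factor_model_axioms.intro) simp_all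
  have "0 \<le> \<tau>" "\<tau> \<le> 1" using tau by simp_all
  note column = functional_factor_model.sum_tpow_HSnorm_Sigma_yy_column_le[OF model this]
    and row = functional_factor_model.sum_tpow_HSnorm_Sigma_yy_row_le[OF model this]
  let ?K = "sparsity_constant \<tau> CARD('r) (sqrt CARD('r \<times> 'r + 'r)) L (1 + CX) (sqrt ((1 + CX) * Ce))"
  show ?thesis
  proof (intro exI allI impI ballI conjI)
    fix p k j assume "CARD('r) \<le> p" "k \<in> {1..k0}" "j < p"
    then show "(\<Sum>i<p. tpow \<tau> (HSnorm a b (Sigma_yy (M p) (A p) (X p) (e p) k i j))) \<le> ?K * c1 p"
      using C6a C6b C4a by (intro column) auto
  next
    fix p k i assume "CARD('r) \<le> p" "k \<in> {1..k0}" "i < p"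
    then show "(\<Sum>j<p. tpow \<tau> (HSnorm a b (Sigma_yy (M p) (A p) (X p) (e p) k i j))) \<le> ?K * (c1 p + c2 p)"
      using C6a C6b C4a by (intro row) auto
  qed
qed

end
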